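(* Let $n\ge3$, $2\le i\le n-1$, $\mathfrak g=\mathfrak{sp}(n,\mathbb C)$ and $\mathfrak q=\mathfrak l\oplus\mathfrak n$ the maximal parabolic subalgebra of type $C_n(i)$. Let $V(\mu+\epsilon_\gamma)$ be the irreducible $\mathfrak l$-submodule of $\mathfrak l_\gamma\otimes\mathfrak z(\mathfrak n)$ with highest weight $\varepsilon_1+\varepsilon_2$. Then the $\mathfrak l$-intertwining operator $\tilde\tau_2|_{V(\mu+\epsilon_\gamma)^*}:V(\mu+\epsilon_\gamma)^*\to\mathcal P^2(\mathfrak g(1))$ is not identically zero.
   Context: $\mathfrak g=\mathfrak{sp}(n,\mathbb C)$ (rank $n$) with Cartan $\mathfrak h$, roots $\pm\varepsilon_j\pm\varepsilon_k$ ($j<k$), $\pm2\varepsilon_j$, simple roots $\alpha_j=\varepsilon_j-\varepsilon_{j+1}$ ($j<n$), $\alpha_n=2\varepsilon_n$, Killing form $\kappa$, root vectors $X_\alpha$. $\mathfrak q=\mathfrak l\oplus\mathfrak n$ is the standard maximal parabolic subalgebra determined by $\alpha_i$ ($\mathfrak l$ = $\mathfrak h$ plus root spaces of roots in the span of $\Pi\setminus\{\alpha_i\}$); grading $\mathfrak g=\bigoplus_{j=-2}^2\mathfrak g(j)$ by the $\alpha_i$-coefficient, $\mathfrak l=\mathfrak g(0)$, $\Delta(\mathfrak g(1))=\{\varepsilon_j\pm\varepsilon_k:1\le j\le i<k\le n\}$, $\mathfrak z(\mathfrak n)=\mathfrak g(2)$ with roots $\varepsilon_j+\varepsilon_k$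 ($j<k\le i$), $2\varepsilon_j$ ($j\le i$), $\mathfrak z(\bar{\mathfrak n})=\mathfrak g(-2)$. $\mathfrak l_\gamma\cong\mathfrak{sl}(i,\mathbb C)$ is the simple ideal of $[\mathfrak l,\mathfrak l]$ with simple roots $\alpha_1,\dots,\alpha_{i-1}$. (Here $\mu=\varepsilon_1+\varepsilon_{i+1}$ is the highest weight of $\mathfrak g(1)$ and $\epsilon_\gamma=\varepsilon_2-\varepsilon_{i+1}$.) $\omega=\sum_{\gamma\in\Delta(\mathfrak z(\mathfrak n))}X^*_\gamma\otimes X_\gamma$ with $X^*_\gamma\in\mathfrak g_{-\gamma}$, $\kappa(X^*_\gamma,X_{\gamma'})=\delta_{\gamma\gamma'}$; $\tau_2(X)=\tfrac12(\mathrm{ad}(X)^2\otimes\mathrm{Id})\omega\in\mathfrak l\otimes\mathfrak z(\mathfrak n)$ for $X\in\mathfrak g(1)$. For an irreducible $\mathfrak l$-constituent $W$ of $\mathfrak l\otimes\mathfrak z(\mathfrak n)$, $W^*$ is realized in $\mathfrak l\otimes\mathfrak z(\bar{\mathfrak n})$ via $(A\otimes B)(C\otimes D)=\kappa(A,C)\kappa(B,D)$, and $\tilde\tau_2|_{W^*}(Y^* )(X)=Y^*(\tau_2(X))$, a homogeneous quadratic polynomial on $\mathfrak g(1)$. *)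

theory Defs
  imports Complex_Main
begin

text \<open>Concrete model of sp(n,C): 2n x 2n complex matrices (entries indexed by
  naturals, required to vanish outside the range 0..2n-1) X with X^T J + J X = 0,
  J = [[0,I],[-I,0]].  Row/column index a < n corresponds to e_(a+1), index n+a
  to f_(a+1).  The Cartan subalgebra is the diagonal part, eps_(j+1)(H) = H j j.\<close>

type_synonym cmat = "nat \<Rightarrow> nat \<Rightarrow> complex"
type_synonym tens = "nat \<Rightarrow> nat \<Rightarrow> nat \<Rightarrow> nat \<Rightarrow> complex"

definition mzero :: cmat where "mzero = (\<lambda>a b. 0)"
definition madd :: "cmat \<Rightarrow> cmat \<Rightarrow> cmat" where "madd A B = (\<lambda>a b. A a b + B a b)"
definition msmult :: "complex \<Rightarrow> cmat \<Rightarrow> cmat" where "msmult c A = (\<lambda>a b. c * A a b)"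
definition mtrans :: "cmat \<Rightarrow> cmat" where "mtrans A = (\<lambda>a b. A b a)"
definition mmult :: "nat \<Rightarrow> cmat \<Rightarrow> cmat \<Rightarrow> cmat" where
  "mmult n A B = (\<lambda>a b. \<Sum>e<2*n. A a e * B e b)"
definition brk :: "nat \<Rightarrow> cmat \<Rightarrow> cmat \<Rightarrow> cmat" where
  "brk n A B = (\<lambda>a b. mmult n A B a b - mmult n B A a b)"
definition mtrace :: "nat \<Rightarrow> cmat \<Rightarrow> complex" where
  "mtrace n A = (\<Sum>a<2*n. A a a)"
definition Emat :: "nat \<Rightarrow> nat \<Rightarrow> cmat" where
  "Emat p q = (\<lambda>a b. if a = p \<and> b = q then 1 else 0)"

definition Jform :: "nat \<Rightarrow> cmat" where
  "Jform n = (\<lambda>a b. if a < n \<and> b = a + n then 1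
                    else if n \<le> a \<and> a < 2*n \<and> b + n = a then -1 else 0)"

definition sp :: "nat \<Rightarrow> cmat set" where
  "sp n = {X. (\<forall>a b. (2*n \<le> a \<or> 2*n \<le> b) \<longrightarrow> X a b = 0) \<and>
              madd (mmult n (mtrans X) (Jform n)) (mmult n (Jform n) X) = mzero}"

text \<open>Killing form of sp(n,C): kappa(X,Y) = tr(ad X ad Y) = (2n+2) tr(XY).\<close>
definition killing :: "nat \<Rightarrow> cmat \<Rightarrow> cmat \<Rightarrow> complex" where
  "killing n X Y = of_nat (2*n+2) * mtrace n (mmult n X Y)"

definition cartan :: "nat \<Rightarrow> cmat set" where
  "cartan n = {H \<in> sp n. \<forall>a b. a \<noteq> b \<longrightarrow> H a b = 0}"

text \<open>Nilradical of the opposite standard Borel (span of negative root vectors for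
  the simple roots alpha_j = eps_j - eps_(j+1), alpha_n = 2 eps_n).\<close>
definition nbar_borel :: "nat \<Rightarrow> cmat set" where
  "nbar_borel n = {X \<in> sp n. (\<forall>a b. a < n \<and> n \<le> b \<longrightarrow> X a b = 0) \<and>
                               (\<forall>a b. a < n \<and> b < n \<and> a \<le> b \<longrightarrow> X a b = 0)}"

text \<open>Grading element for alpha_i: eps_j(H) = 1 for j \<le> i, 0 otherwise, so that
  ad(H) acts on a root space by the alpha_i-coefficient of the root.\<close>
definition Hgr :: "nat \<Rightarrow> nat \<Rightarrow> cmat" where
  "Hgr n i = (\<lambda>a b. if a = b \<and> a < i then 1
                    else if a = b \<and> n \<le> a \<and> a < n + i then -1 else 0)"

definition gdeg :: "nat \<Rightarrow> nat \<Rightarrow> int \<Rightarrow> cmat set" where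
  "gdeg n i k = {X \<in> sp n. brk n (Hgr n i) X = msmult (of_int k) X}"

definition levi :: "nat \<Rightarrow> nat \<Rightarrow> cmat set" where
  "levi n i = gdeg n i 0"

text \<open>Root vectors for the roots eps_(j+1) + eps_(k+1), j \<le> k < i, of z(n) = g(2)
  (for j = k this is the root 2 eps_(j+1)), and root vectors for their negatives.\<close>
definition Xroot :: "nat \<Rightarrow> nat \<Rightarrow> nat \<Rightarrow> cmat" where
  "Xroot n j k = madd (Emat j (n + k)) (Emat k (n + j))"
definition Yroot :: "nat \<Rightarrow> nat \<Rightarrow> nat \<Rightarrow> cmat" where
  "Yroot n j k = madd (Emat (n + j) k) (Emat (n + k) j)"
text \<open>X^*_gamma in g_(-gamma) normalised by kappa(X^*_gamma, X_gamma) = 1.\<close>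
definition Xstar :: "nat \<Rightarrow> nat \<Rightarrow> nat \<Rightarrow> cmat" where
  "Xstar n j k = msmult (1 / killing n (Yroot n j k) (Xroot n j k)) (Yroot n j k)"

text \<open>Tensors in gl(2n) \<otimes> gl(2n) as 4-index arrays; (A \<otimes> B) a b c d = A a b * B c d.\<close>
definition tp :: "cmat \<Rightarrow> cmat \<Rightarrow> tens" where
  "tp A B = (\<lambda>a b c d. A a b * B c d)"
definition tzero :: tens where "tzero = (\<lambda>a b c d. 0)"
definition tadd :: "tens \<Rightarrow> tens \<Rightarrow> tens" where
  "tadd S T = (\<lambda>a b c d. S a b c d + T a b c d)"
definition tsmult :: "complex \<Rightarrow> tens \<Rightarrow> tens" where
  "tsmult x T = (\<lambda>a b c d. x * T a b c d)"

inductive_set tspan :: "cmat set \<Rightarrow> cmat set \<Rightarrow> tens set" for U W where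
  tspan_zero: "tzero \<in> tspan U W"
| tspan_tp: "A \<in> U \<Longrightarrow> B \<in> W \<Longrightarrow> tp A B \<in> tspan U W"
| tspan_add: "S \<in> tspan U W \<Longrightarrow> T \<in> tspan U W \<Longrightarrow> tadd S T \<in> tspan U W"
| tspan_smult: "S \<in> tspan U W \<Longrightarrow> tsmult x S \<in> tspan U W"

text \<open>Adjoint action on tensors: Z.(A \<otimes> B) = [Z,A] \<otimes> B + A \<otimes> [Z,B].\<close>
definition tact :: "nat \<Rightarrow> cmat \<Rightarrow> tens \<Rightarrow> tens" where
  "tact n Z T = (\<lambda>a b c d. \<Sum>e<2*n.
      Z a e * T e b c d - T a e c d * Z e b + Z c e * T a b e d - T a b c e * Z e d)"

text \<open>Pairing (A \<otimes> B)(C \<otimes> D) = kappa(A,C) kappa(B,D), extended bilinearly.\<close>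
definition tpair :: "nat \<Rightarrow> tens \<Rightarrow> tens \<Rightarrow> complex" where
  "tpair n S T = (of_nat (2*n+2))^2 *
     (\<Sum>a<2*n. \<Sum>b<2*n. \<Sum>c<2*n. \<Sum>d<2*n. S a b c d * T b a d c)"

text \<open>tau_2(X) = 1/2 (ad(X)^2 \<otimes> Id) omega, omega = sum_gamma X^*_gamma \<otimes> X_gamma.\<close>
definition tau2 :: "nat \<Rightarrow> nat \<Rightarrow> cmat \<Rightarrow> tens" where
  "tau2 n i X = (\<lambda>a b c d. (1/2) * (\<Sum>(j,k) \<in> {(j,k). j \<le> k \<and> k < i}.
      tp (brk n X (brk n X (Xstar n j k))) (Xroot n j k) a b c d))"

inductive_set gen_submod :: "nat \<Rightarrow> cmat set \<Rightarrow> tens \<Rightarrow> tens set" for n L v where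
  gen_base: "v \<in> gen_submod n L v"
| gen_zero: "tzero \<in> gen_submod n L v"
| gen_act: "S \<in> gen_submod n L v \<Longrightarrow> Z \<in> L \<Longrightarrow> tact n Z S \<in> gen_submod n L v"
| gen_add: "S \<in> gen_submod n L v \<Longrightarrow> T \<in> gen_submod n L v \<Longrightarrow> tadd S T \<in> gen_submod n L v"
| gen_smult: "S \<in> gen_submod n L v \<Longrightarrow> tsmult x S \<in> gen_submod n L v"

text \<open>v is a lowest weight vector of weight -(eps_1 + eps_2) for l in l \<otimes> z(nbar);
  the l-submodule it generates is the realisation of V(mu + eps_gamma)^* inside
  l \<otimes> z(nbar) (this isotypic component has multiplicity one).\<close>
definition lowest_wt_vec :: "nat \<Rightarrow> nat \<Rightarrow> tens \<Rightarrow> bool" where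
  "lowest_wt_vec n i v \<longleftrightarrow>
     v \<in> tspan (levi n i) (gdeg n i (-2)) \<and> v \<noteq> tzero \<and>
     (\<forall>H \<in> cartan n. tact n H v = tsmult (- (H 0 0 + H 1 1)) v) \<and>
     (\<forall>Z \<in> levi n i \<inter> nbar_borel n. tact n Z v = tzero)"

end

theory Submission
  imports Defs "HOL-Library.Function_Algebras"
begin

text \<open>The l-module V(mu + eps_gamma)^* occurs in l \<otimes> z(nbar) with multiplicity one: the weight
  condition restricts the support of a vector of weight -(eps_1 + eps_2) to a few index patterns,
  and invariance under the lower triangular part of gl(i) then expresses every entry as a fixed
  multiple of one entry. So every lowest weight vector is a nonzero multiple of an explicit one,
  v = sum_m E_m2 \<otimes> Y_(eps_1+eps_m) - E_m1 \<otimes> Y_(eps_2+eps_m). As omega is built from dual bases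
  of z(n) and z(nbar), pairing v with tau_2(X) contracts to
  1/2 sum_m kappa(E_m2, ad(X)^2 Y_(eps_1+eps_m)) - kappa(E_m1, ad(X)^2 Y_(eps_2+eps_m)), which for
  X = X_(eps_1+eps_(i+1)) + X_(eps_2-eps_(i+1)) equals (2n+2)(2i+2) \<noteq> 0.\<close>

section \<open>The symplectic Lie algebra\<close>

lemma sum_apply: "(\<Sum>a\<in>A. f a) x = (\<Sum>a\<in>A. f a x)"
  by (induct A rule: infinite_finite_induct) auto

lemma sum_lessThan_delta [simp]:
  "(\<Sum>e<(N::nat). if e = q then f e else 0) = (if q < N then f q else 0)"
  "(\<Sum>e<(N::nat). if q = e then f e else 0) = (if q < N then f q else 0)"
  by (simp_all only: sum.delta[OF finite_lessThan] sum.delta'[OF finite_lessThan] lessThan_iff)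

lemma sum_Emat_left: "q < N \<Longrightarrow> (\<Sum>e<N. Emat p q a e * B e) = (if a = p then B q else 0)"
  unfolding Emat_def by (cases "a = p") (simp_all add: if_distrib[of "\<lambda>x. x * _"] cong: if_cong)

lemma sum_Emat_right: "p < N \<Longrightarrow> (\<Sum>e<N. B e * Emat p q e b) = (if b = q then B p else 0)"
  unfolding Emat_def by (cases "b = q") (simp_all add: if_distrib[of "\<lambda>x. _ * x"] cong: if_cong)

definition msubspace :: "cmat set \<Rightarrow> bool" where
  "msubspace U \<longleftrightarrow> 0 \<in> U \<and> (\<forall>X\<in>U. \<forall>Y\<in>U. X + Y \<in> U) \<and> (\<forall>X\<in>U. \<forall>s. (\<lambda>a b. s * X a b) \<in> U)"

definition sp_defect :: "nat \<Rightarrow> cmat \<Rightarrow> nat \<Rightarrow> nat \<Rightarrow> complex" where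
  "sp_defect n X a b =
     (if n \<le> b \<and> b < 2*n then X (b-n) a else 0) - (if b < n then X (b+n) a else 0)
   + (if a < n then X (a+n) b else 0) - (if n \<le> a \<and> a < 2*n then X (a-n) b else 0)"

lemma sp_condition_entry:
  "madd (mmult n (mtrans X) (Jform n)) (mmult n (Jform n) X) a b = sp_defect n X a b"
proof -
  have J_col: "Jform n e b = (if e = b - n \<and> n \<le> b \<and> b < 2*n then 1 else 0)
      - (if e = b + n \<and> b < n then 1 else 0)" for e
    unfolding Jform_def by auto
  have J_row: "Jform n a e = (if e = a + n \<and> a < n then 1 else 0)
      - (if e = a - n \<and> n \<le> a \<and> a < 2*n then 1 else 0)" for e
    unfolding Jform_def by auto
  have "(\<Sum>e<2*n. X e a * Jform n e b)
      = (if n \<le> b \<and> b < 2*n then X (b-n) a else 0) - (if b < n then X (b+n) a else 0)"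
    unfolding J_col
    by (simp add: right_diff_distrib sum_subtractf if_distrib[of "\<lambda>x. _ * x"] cong: if_cong) auto
  moreover have "(\<Sum>e<2*n. Jform n a e * X e b)
      = (if a < n then X (a+n) b else 0) - (if n \<le> a \<and> a < 2*n then X (a-n) b else 0)"
    unfolding J_row
    by (simp add: left_diff_distrib sum_subtractf if_distrib[of "\<lambda>x. x * _"] cong: if_cong) auto
  ultimately show ?thesis
    unfolding madd_def mmult_def mtrans_def sp_defect_def by simp
qed

lemma sp_iff_defect:
  "X \<in> sp n \<longleftrightarrow> (\<forall>a b. (2*n \<le> a \<or> 2*n \<le> b) \<longrightarrow> X a b = 0) \<and> (\<forall>a b. sp_defect n X a b = 0)"
  unfolding sp_def mzero_def fun_eq_iff sp_condition_entry by simp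

lemma sp_vanish_outside: "X \<in> sp n \<Longrightarrow> 2*n \<le> a \<or> 2*n \<le> b \<Longrightarrow> X a b = 0"
  unfolding sp_iff_defect by blast

lemma sp_lower_sym: "X \<in> sp n \<Longrightarrow> a < n \<Longrightarrow> b < n \<Longrightarrow> X (n+a) b = X (n+b) a"
  unfolding sp_iff_defect by (drule conjunct2, drule spec2[of _ a b]) (simp add: sp_defect_def add.commute)

lemma sp_upper_sym: "X \<in> sp n \<Longrightarrow> a < n \<Longrightarrow> b < n \<Longrightarrow> X a (n+b) = X b (n+a)"
  unfolding sp_iff_defect by (drule conjunct2, drule spec2[of _ "n+a" "n+b"]) (simp add: sp_defect_def)

lemma sp_lower_block: "X \<in> sp n \<Longrightarrow> a < n \<Longrightarrow> b < n \<Longrightarrow> X (n+a) (n+b) = - X b a"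
  unfolding sp_iff_defect by (drule conjunct2, drule spec2[of _ a "n+b"])
    (simp add: sp_defect_def add.commute eq_neg_iff_add_eq_0)

lemma sp_iff:
  "X \<in> sp n \<longleftrightarrow> (\<forall>a b. (2*n \<le> a \<or> 2*n \<le> b) \<longrightarrow> X a b = 0) \<and>
     (\<forall>x<n. \<forall>y<n. X (n+x) y = X (n+y) x \<and> X x (n+y) = X y (n+x) \<and> X (n+x) (n+y) = - X y x)"
    (is "_ \<longleftrightarrow> ?out \<and> ?blocks")
proof
  assume "X \<in> sp n"
  then show "?out \<and> ?blocks"
    using sp_vanish_outside sp_lower_sym sp_upper_sym sp_lower_block by blast
next
  assume A: "?out \<and> ?blocks"
  have "sp_defect n X a b = 0" for a b
  proof -
    consider "2*n \<le> a \<or> 2*n \<le> b" | "a < n" "b < n" | y where "a < n" "b = n + y" "y < n"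
      | x where "a = n + x" "x < n" "b < n" | x y where "a = n + x" "x < n" "b = n + y" "y < n"
      by (metis add_less_imp_less_left le_Suc_ex mult_2 not_le)
    then show ?thesis
    proof cases
      case 1 then show ?thesis using A unfolding sp_defect_def by auto
    next
      case 2 then show ?thesis using A unfolding sp_defect_def by (auto simp: add.commute)
    next
      case (3 y) then show ?thesis using A[THEN conjunct2, rule_format, of a y]
        unfolding sp_defect_def by (auto simp: add.commute)
    next
      case (4 x) then show ?thesis using A[THEN conjunct2, rule_format, of b x]
        unfolding sp_defect_def by (auto simp: add.commute)
    next
      case (5 x y) then show ?thesis using A[THEN conjunct2, rule_format, of x y]
        unfolding sp_defect_def by (auto simp: add.commute)
    qed
  qed
  then show "X \<in> sp n" using A unfolding sp_iff_defect by blast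
qed

lemma msubspace_sp: "msubspace (sp n)"
  unfolding msubspace_def
  by (simp add: sp_iff[of 0] sp_iff[of "_ + _"] sp_iff[of "\<lambda>a b. _ * _ a b"]
      sp_vanish_outside sp_lower_sym sp_upper_sym sp_lower_block)

section \<open>Grading, Levi factor and root vectors\<close>

lemma Hgr_entry: "Hgr n i a e = (if e = a then Hgr n i a a else 0)"
  unfolding Hgr_def by auto

lemma Hgr_diag_outside: "i \<le> n \<Longrightarrow> 2*n \<le> a \<Longrightarrow> Hgr n i a a = 0"
  unfolding Hgr_def by auto

lemma brk_Hgr: "i \<le> n \<Longrightarrow> brk n (Hgr n i) X a b = (Hgr n i a a - Hgr n i b b) * X a b"
  unfolding brk_def mmult_def
  by (subst (1 2) Hgr_entry) (auto simp: if_distrib[of "\<lambda>x. x * _"] if_distrib[of "\<lambda>x. _ * x"]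
      Hgr_diag_outside algebra_simps cong: if_cong)

lemma gdeg_iff:
  "i \<le> n \<Longrightarrow> X \<in> gdeg n i k \<longleftrightarrow>
     X \<in> sp n \<and> (\<forall>a b. X a b \<noteq> 0 \<longrightarrow> Hgr n i a a - Hgr n i b b = of_int k)"
  unfolding gdeg_def by (auto simp: fun_eq_iff brk_Hgr msmult_def)

lemma gdeg_intro:
  "i \<le> n \<Longrightarrow> X \<in> sp n \<Longrightarrow> (\<And>a b. X a b \<noteq> 0 \<Longrightarrow> Hgr n i a a - Hgr n i b b = of_int k)
    \<Longrightarrow> X \<in> gdeg n i k"
  by (simp add: gdeg_iff)

lemma gdeg_sp: "X \<in> gdeg n i k \<Longrightarrow> X \<in> sp n"
  unfolding gdeg_def by simp

lemma levi_sp: "Z \<in> levi n i \<Longrightarrow> Z \<in> sp n"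
  unfolding levi_def by (rule gdeg_sp)

lemma msubspace_gdeg:
  assumes "i \<le> n" shows "msubspace (gdeg n i k)"
proof -
  have "0 \<in> sp n" "\<And>X Y. X \<in> sp n \<Longrightarrow> Y \<in> sp n \<Longrightarrow> X + Y \<in> sp n"
    "\<And>X s. X \<in> sp n \<Longrightarrow> (\<lambda>a b. s * X a b) \<in> sp n"
    using msubspace_sp[of n] unfolding msubspace_def by blast+
  then show ?thesis
    unfolding msubspace_def Ball_def gdeg_iff[OF assms]
    by (intro conjI allI impI; simp; metis add.right_neutral mult_zero_right)
qed

definition gl_unit :: "nat \<Rightarrow> nat \<Rightarrow> nat \<Rightarrow> cmat" where
  "gl_unit n p q = Emat p q - Emat (n+q) (n+p)"

lemma gl_unit_entry:
  "gl_unit n p q a b = (if a = p \<and> b = q then 1 else 0) - (if a = n+q \<and> b = n+p then 1 else 0)"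
  unfolding gl_unit_def Emat_def by simp

lemma gl_unit_nonzero: "gl_unit n p q a b \<noteq> 0 \<Longrightarrow> (a = p \<and> b = q) \<or> (a = n+q \<and> b = n+p)"
  unfolding gl_unit_entry by (auto split: if_splits)

lemma gl_unit_sp: "p < n \<Longrightarrow> q < n \<Longrightarrow> gl_unit n p q \<in> sp n"
  unfolding sp_iff gl_unit_entry by simp

lemma gl_unit_levi: "p < i \<Longrightarrow> q < i \<Longrightarrow> i < n \<Longrightarrow> gl_unit n p q \<in> levi n i"
  unfolding levi_def by (rule gdeg_intro) (auto simp: gl_unit_sp Hgr_def dest!: gl_unit_nonzero)

lemma gl_unit_cartan: "p < n \<Longrightarrow> gl_unit n p p \<in> cartan n"
  unfolding cartan_def using gl_unit_sp[of p n p] gl_unit_nonzero[of n p p] by blast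

lemma gl_unit_nbar_borel: "q < p \<Longrightarrow> p < n \<Longrightarrow> gl_unit n p q \<in> nbar_borel n"
  unfolding nbar_borel_def using gl_unit_sp[of p n q] gl_unit_nonzero[of n p q] by fastforce

lemma sum_gl_unit_left:
  "p < n \<Longrightarrow> q < n \<Longrightarrow>
     (\<Sum>e<2*n. gl_unit n p q a e * F e) = (if a = p then F q else 0) - (if a = n+q then F (n+p) else 0)"
  unfolding gl_unit_entry
  by (cases "a = p"; cases "a = n+q"; simp add: left_diff_distrib sum_subtractf sum_negf if_distrib[of "\<lambda>x. x * _"] cong: if_cong)

lemma sum_gl_unit_right:
  "p < n \<Longrightarrow> q < n \<Longrightarrow>
     (\<Sum>e<2*n. F e * gl_unit n p q e b) = (if b = q then F p else 0) - (if b = n+p then F (n+q) else 0)"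
  unfolding gl_unit_entry
  by (cases "b = q"; cases "b = n+p"; simp add: right_diff_distrib sum_subtractf sum_negf if_distrib[of "\<lambda>x. _ * x"] cong: if_cong)

lemma brk_gl_unit:
  "p < n \<Longrightarrow> q < n \<Longrightarrow> brk n (gl_unit n p q) X a b =
     (if a = p then X q b else 0) - (if a = n+q then X (n+p) b else 0)
   - (if b = q then X a p else 0) + (if b = n+p then X a (n+q) else 0)"
  unfolding brk_def mmult_def by (simp add: sum_gl_unit_left sum_gl_unit_right)

lemma brk_gl_unit_gl_unit:
  assumes "p < n" "q < n" "r < n" "s < n"
  shows "brk n (gl_unit n p q) (gl_unit n r s)
    = (if q = r then gl_unit n p s else 0) - (if s = p then gl_unit n r q else 0)"
  using assms by (intro ext) (cases "q = r"; cases "s = p"; simp add: brk_gl_unit gl_unit_entry)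

lemma Yroot_entry:
  "Yroot n j k a b = (if a = n+j \<and> b = k then 1 else 0) + (if a = n+k \<and> b = j then 1 else 0)"
  unfolding Yroot_def madd_def Emat_def by (rule refl)

lemma Xroot_entry:
  "Xroot n j k a b = (if a = j \<and> b = n+k then 1 else 0) + (if a = k \<and> b = n+j then 1 else 0)"
  unfolding Xroot_def madd_def Emat_def by (rule refl)

lemma Yroot_commute: "Yroot n j k = Yroot n k j"
  unfolding Yroot_def madd_def by (simp add: fun_eq_iff add.commute)

lemma Yroot_nonzero: "Yroot n j k a b \<noteq> 0 \<Longrightarrow> (a = n+j \<and> b = k) \<or> (a = n+k \<and> b = j)"
  unfolding Yroot_entry by (auto split: if_splits)

lemma Yroot_sp:
  assumes "j < n" "k < n" shows "Yroot n j k \<in> sp n"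
proof -
  have "Yroot n j k (n+x) y = Yroot n j k (n+y) x" for x y
    unfolding Yroot_entry by (cases "x = j"; cases "y = k"; cases "x = k"; cases "y = j"; simp)
  then show ?thesis
    unfolding sp_iff using assms by (auto simp: Yroot_entry)
qed

lemma Yroot_gdeg: "j < i \<Longrightarrow> k < i \<Longrightarrow> i < n \<Longrightarrow> Yroot n j k \<in> gdeg n i (-2)"
  by (rule gdeg_intro) (auto simp: Yroot_sp Hgr_def dest!: Yroot_nonzero)

lemma brk_gl_unit_Yroot:
  assumes "p < n" "q < n" "j < n" "k < n"
  shows "brk n (gl_unit n p q) (Yroot n j k)
    = - (if p = j then Yroot n q k else 0) - (if p = k then Yroot n j q else 0)"
proof (intro ext)
  fix a b
  show "brk n (gl_unit n p q) (Yroot n j k) a b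
    = (- (if p = j then Yroot n q k else 0) - (if p = k then Yroot n j q else 0)) a b"
    unfolding brk_gl_unit[OF assms(1,2)] using assms
    by (cases "p = j"; cases "p = k"; cases "a = n + q"; cases "b = q"; simp add: Yroot_entry)
qed

section \<open>Tensors: adjoint action and pairing\<close>

lemma tzero_eq_zero: "tzero = 0"
  by (simp add: tzero_def fun_eq_iff)

lemma tadd_eq_plus: "tadd S T = S + T"
  by (simp add: tadd_def fun_eq_iff)

lemma tspan_slices:
  assumes "S \<in> tspan U W" and U: "msubspace U" and W: "msubspace W"
  shows "(\<lambda>a b. S a b c d) \<in> U" and "(\<lambda>c d. S a b c d) \<in> W"
proof -
  have "(\<forall>c d. (\<lambda>a b. S a b c d) \<in> U) \<and> (\<forall>a b. (\<lambda>c d. S a b c d) \<in> W)"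
    using assms(1)
  proof induct
    case tspan_zero
    then show ?case using U W by (simp add: msubspace_def tzero_def zero_fun_def)
  next
    case (tspan_tp A B)
    have "(\<lambda>a b. tp A B a b c d) = (\<lambda>a b. B c d * A a b)" for c d
      by (simp add: tp_def mult.commute)
    moreover have "(\<lambda>c d. tp A B a b c d) = (\<lambda>c d. A a b * B c d)" for a b
      by (simp add: tp_def)
    ultimately show ?case using tspan_tp U W by (simp add: msubspace_def)
  next
    case (tspan_add S T)
    have "(\<lambda>a b. tadd S T a b c d) = (\<lambda>a b. S a b c d) + (\<lambda>a b. T a b c d)"
      and "(\<lambda>c d. tadd S T a b c d) = (\<lambda>c d. S a b c d) + (\<lambda>c d. T a b c d)" for a b c d
      by (simp_all add: tadd_def fun_eq_iff)
    then show ?case using tspan_add U W unfolding msubspace_def by (simp only:) blast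
  next
    case (tspan_smult S x)
    then show ?case using U W by (simp add: msubspace_def tsmult_def)
  qed
  then show "(\<lambda>a b. S a b c d) \<in> U" "(\<lambda>c d. S a b c d) \<in> W" by blast+
qed

lemma tspan_diff: "S \<in> tspan U W \<Longrightarrow> T \<in> tspan U W \<Longrightarrow> S - T \<in> tspan U W"
  using tspan_add[OF _ tspan_smult, of S U W T "-1"]
  by (simp add: tadd_def tsmult_def fun_diff_def)

lemma tspan_sum: "(\<And>m. m \<in> A \<Longrightarrow> f m \<in> tspan U W) \<Longrightarrow> sum f A \<in> tspan U W"
proof (induct A rule: infinite_finite_induct)
  case (infinite A)
  then show ?case by (metis sum.infinite tspan_zero tzero_eq_zero)
next
  case empty
  then show ?case by (metis sum.empty tspan_zero tzero_eq_zero)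
next
  case (insert x F)
  then show ?case by (metis insertCI sum.insert tadd_eq_plus tspan_add)
qed

lemma tp_diff_left: "tp (A - B) C = tp A C - tp B C"
  by (simp add: tp_def fun_eq_iff algebra_simps)

lemma tp_diff_right: "tp A (B - C) = tp A B - tp A C"
  by (simp add: tp_def fun_eq_iff algebra_simps)

lemma tp_uminus_right: "tp A (- C) = - tp A C"
  by (simp add: tp_def fun_eq_iff)

lemma tp_if_zero_left: "tp (if P then A else 0) C = (if P then tp A C else 0)"
  by (simp add: tp_def fun_eq_iff)

lemma tp_if_zero_right: "tp A (if P then C else 0) = (if P then tp A C else 0)"
  by (simp add: tp_def fun_eq_iff)

lemma tsmult_zero: "tsmult x 0 = 0"
  by (simp add: tsmult_def fun_eq_iff)

lemma tact_tp: "tact n Z (tp A B) = tp (brk n Z A) B + tp A (brk n Z B)"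
  unfolding tact_def tp_def brk_def mmult_def
  by (simp add: fun_eq_iff sum_subtractf sum.distrib sum_distrib_left sum_distrib_right algebra_simps)

lemma tact_add: "tact n Z (S + T) = tact n Z S + tact n Z T"
  unfolding tact_def by (simp add: fun_eq_iff sum_subtractf sum.distrib algebra_simps)

lemma tact_diff: "tact n Z (S - T) = tact n Z S - tact n Z T"
  unfolding tact_def by (simp add: fun_eq_iff sum_subtractf sum.distrib algebra_simps)

lemma tact_zero: "tact n Z 0 = 0"
  unfolding tact_def by (simp add: fun_eq_iff)

lemma tact_tsmult: "tact n Z (tsmult x T) = tsmult x (tact n Z T)"
  unfolding tact_def tsmult_def by (simp add: fun_eq_iff sum_distrib_left algebra_simps)

lemma tact_sum: "tact n Z (sum f A) = (\<Sum>m\<in>A. tact n Z (f m))"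
  using sum_comp_morphism[of "tact n Z" f A] by (simp add: tact_add tact_zero o_def)

lemma tact_add_left: "tact n (Z1 + Z2) T = tact n Z1 T + tact n Z2 T"
  unfolding tact_def by (simp add: fun_eq_iff sum_subtractf sum.distrib algebra_simps)

lemma tact_zero_left: "tact n 0 T = 0"
  unfolding tact_def by (simp add: fun_eq_iff)

lemma tact_sum_left: "tact n (sum f A) T = (\<Sum>m\<in>A. tact n (f m) T)"
  using sum_comp_morphism[of "\<lambda>Z. tact n Z T" f A]
  by (simp add: tact_add_left tact_zero_left o_def)

lemma tact_smult_left: "tact n (\<lambda>a b. s * Z a b) T = tsmult s (tact n Z T)"
  unfolding tact_def tsmult_def by (simp add: fun_eq_iff sum_distrib_left algebra_simps)

lemma cartan_entry: "H \<in> cartan n \<Longrightarrow> H a e = (if e = a then H a a else 0)"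
  unfolding cartan_def by auto

lemma tact_cartan:
  assumes "H \<in> cartan n"
  shows "tact n H T a b c d = (H a a - H b b + H c c - H d d) * T a b c d"
proof -
  have diag_out: "H e e = 0" if "2*n \<le> e" for e
    using assms that sp_vanish_outside unfolding cartan_def by blast
  have "tact n H T a b c d = H a a * T a b c d - T a b c d * H b b + H c c * T a b c d - T a b c d * H d d"
    unfolding tact_def
    by (subst (1 2 3 4) cartan_entry[OF assms])
      (auto simp: sum.distrib sum_subtractf if_distrib[of "\<lambda>x. x * _"] if_distrib[of "\<lambda>x. _ * x"]
        diag_out cong: if_cong)
  then show ?thesis by (simp add: algebra_simps)
qed

lemma tact_gl_unit_entry:
  assumes "p < n" "q < n"
  shows "tact n (gl_unit n p q) T a b c d =
      (if a = p then T q b c d else 0) - (if a = n+q then T (n+p) b c d else 0)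
    - ((if b = q then T a p c d else 0) - (if b = n+p then T a (n+q) c d else 0))
    + ((if c = p then T a b q d else 0) - (if c = n+q then T a b (n+p) d else 0))
    - ((if d = q then T a b c p else 0) - (if d = n+p then T a b c (n+q) else 0))"
  unfolding tact_def
  by (simp only: sum_subtractf sum.distrib sum_gl_unit_left[OF assms] sum_gl_unit_right[OF assms])

lemma tpair_tp: "tpair n (tp A B) (tp C D) = killing n A C * killing n B D"
proof -
  let ?Y = "\<Sum>c<2*n. \<Sum>d<2*n. B c d * D d c"
  have "tpair n (tp A B) (tp C D) = (of_nat (2*n+2))^2 * (\<Sum>a<2*n. \<Sum>b<2*n. (A a b * C b a) * ?Y)"
    unfolding tpair_def tp_def by (simp add: sum_distrib_left mult_ac)
  also have "\<dots> = killing n A C * killing n B D"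
    unfolding killing_def mtrace_def mmult_def by (simp add: sum_distrib_right power2_eq_square mult_ac)
  finally show ?thesis .
qed

lemma tpair_add_left: "tpair n (S1 + S2) T = tpair n S1 T + tpair n S2 T"
  unfolding tpair_def by (simp add: sum.distrib algebra_simps)

lemma tpair_diff_left: "tpair n (S1 - S2) T = tpair n S1 T - tpair n S2 T"
  unfolding tpair_def by (simp add: sum_subtractf algebra_simps)

lemma tpair_sum_left: "tpair n (sum f A) T = (\<Sum>m\<in>A. tpair n (f m) T)"
  using sum_comp_morphism[of "\<lambda>S. tpair n S T" f A]
  by (simp add: tpair_add_left o_def) (simp add: tpair_def)

lemma tpair_smult_left: "tpair n (tsmult x S) T = x * tpair n S T"
  unfolding tpair_def tsmult_def by (simp add: sum_distrib_left algebra_simps)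

lemma tpair_add_right: "tpair n S (T1 + T2) = tpair n S T1 + tpair n S T2"
  unfolding tpair_def by (simp add: sum.distrib algebra_simps)

lemma tpair_sum_right: "tpair n S (sum f A) = (\<Sum>m\<in>A. tpair n S (f m))"
  using sum_comp_morphism[of "tpair n S" f A]
  by (simp add: tpair_add_right o_def) (simp add: tpair_def)

lemma tpair_smult_right: "tpair n S (tsmult x T) = x * tpair n S T"
  unfolding tpair_def tsmult_def by (simp add: sum_distrib_left algebra_simps)

section \<open>An explicit lowest weight vector\<close>

text \<open>In 1-based indices gl_unit n p q is the matrix unit E_(p+1)(q+1) of gl(i) and Yroot n j k
  spans g_(-eps_(j+1)-eps_(k+1)).\<close>

definition lw_vector :: "nat \<Rightarrow> nat \<Rightarrow> tens" where
  "lw_vector n i = (\<Sum>m<i. tp (gl_unit n m 1) (Yroot n 0 m) - tp (gl_unit n m 0) (Yroot n 1 m))"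

lemma lw_vector_entry:
  "lw_vector n i a b c d =
     (\<Sum>m<i. gl_unit n m 1 a b * Yroot n 0 m c d - gl_unit n m 0 a b * Yroot n 1 m c d)"
  unfolding lw_vector_def by (simp add: sum_apply tp_def)

lemma lw_vector_tspan: "2 \<le> i \<Longrightarrow> i < n \<Longrightarrow> lw_vector n i \<in> tspan (levi n i) (gdeg n i (-2))"
  unfolding lw_vector_def by (intro tspan_sum tspan_diff tspan_tp gl_unit_levi Yroot_gdeg) auto

lemma lw_vector_normalized: "2 \<le> i \<Longrightarrow> i < n \<Longrightarrow> lw_vector n i 1 1 n 1 = 1"
  unfolding lw_vector_entry gl_unit_entry Yroot_entry
  by (simp add: if_distrib[of "\<lambda>x. x * _"] cong: if_cong)

lemma weight_gl_unit_tp_Yroot: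
  assumes H: "H \<in> cartan n" and "m < n" "r < n" "s < n"
  shows "(H a a - H b b + H c c - H d d + H s s + H r r) * (gl_unit n m r a b * Yroot n s m c d) = 0"
proof (cases "gl_unit n m r a b = 0 \<or> Yroot n s m c d = 0")
  case False
  have H_lower: "H (n+x) (n+x) = - H x x" if "x < n" for x
    using H sp_lower_block that unfolding cartan_def by blast
  from False have "(a = m \<and> b = r) \<or> (a = n+r \<and> b = n+m)" "(c = n+s \<and> d = m) \<or> (c = n+m \<and> d = s)"
    using gl_unit_nonzero Yroot_nonzero by blast+
  then show ?thesis using H_lower assms by (elim disjE conjE) simp_all
qed simp

lemma lw_vector_weight:
  assumes H: "H \<in> cartan n" and "2 \<le> i" "i < n"
  shows "tact n H (lw_vector n i) = tsmult (- (H 0 0 + H 1 1)) (lw_vector n i)"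
proof -
  have key: "(H a a - H b b + H c c - H d d + (H 0 0 + H 1 1)) * lw_vector n i a b c d = 0" for a b c d
    unfolding lw_vector_entry sum_distrib_left
  proof (intro sum.neutral ballI)
    fix m assume "m \<in> {..<i}"
    then have m: "m < n" using assms by simp
    show "(H a a - H b b + H c c - H d d + (H 0 0 + H 1 1)) *
        (gl_unit n m 1 a b * Yroot n 0 m c d - gl_unit n m 0 a b * Yroot n 1 m c d) = 0"
      using weight_gl_unit_tp_Yroot[OF H m, of 1 0 a b c d] weight_gl_unit_tp_Yroot[OF H m, of 0 1 a b c d] assms
      by (simp add: algebra_simps)
  qed
  have "tact n H (lw_vector n i) a b c d = - (H 0 0 + H 1 1) * lw_vector n i a b c d" for a b c d
    using key[of a b c d] unfolding tact_cartan[OF H] by (simp only: distrib_right eq_neg_iff_add_eq_0 mult_minus_left)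
  then show ?thesis by (simp add: fun_eq_iff tsmult_def)
qed

lemma tact_gl_unit_lw_vector:
  assumes "q < p" "p < i" "i < n"
  shows "tact n (gl_unit n p q) (lw_vector n i) = 0"
proof -
  let ?T = "gl_unit n p q"
  have "tact n ?T (lw_vector n i)
    = (\<Sum>m<i. tp (brk n ?T (gl_unit n m 1)) (Yroot n 0 m) + tp (gl_unit n m 1) (brk n ?T (Yroot n 0 m))
        - (tp (brk n ?T (gl_unit n m 0)) (Yroot n 1 m) + tp (gl_unit n m 0) (brk n ?T (Yroot n 1 m))))"
    unfolding lw_vector_def tact_sum tact_diff tact_tp ..
  also have "\<dots> = (\<Sum>m<i.
        tp ((if q = m then gl_unit n p 1 else 0) - (if 1 = p then gl_unit n m q else 0)) (Yroot n 0 m)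
      + tp (gl_unit n m 1) (- (if p = 0 then Yroot n q m else 0) - (if p = m then Yroot n 0 q else 0))
      - (tp ((if q = m then gl_unit n p 0 else 0) - (if 0 = p then gl_unit n m q else 0)) (Yroot n 1 m)
      + tp (gl_unit n m 0) (- (if p = 1 then Yroot n q m else 0) - (if p = m then Yroot n 1 q else 0))))"
    using assms by (intro sum.cong refl) (simp add: brk_gl_unit_gl_unit brk_gl_unit_Yroot)
  also have "\<dots> = 0"
    using assms Yroot_commute[of n 1 0]
    by (cases "p = 1") (simp_all add: tp_diff_left tp_diff_right tp_uminus_right tp_if_zero_left
        tp_if_zero_right sum.distrib sum_subtractf sum_negf)
  finally show ?thesis .
qed

definition block_index :: "nat \<Rightarrow> nat \<Rightarrow> nat \<Rightarrow> bool" where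
  "block_index n i x \<longleftrightarrow> x < i \<or> (n \<le> x \<and> x < n + i)"

lemma lw_vector_support:
  assumes "lw_vector n i a b c d \<noteq> 0" and "2 \<le> i"
  shows "block_index n i a \<and> block_index n i b \<and> block_index n i c \<and> block_index n i d"
proof (rule ccontr)
  assume outside: "\<not> ?thesis"
  have vanish: "gl_unit n m r a b * Yroot n s m c d = 0" if "m < i" "r < i" "s < i" for m r s
  proof (rule ccontr)
    assume "gl_unit n m r a b * Yroot n s m c d \<noteq> 0"
    then have "(a = m \<and> b = r) \<or> (a = n+r \<and> b = n+m)" "(c = n+s \<and> d = m) \<or> (c = n+m \<and> d = s)"
      using gl_unit_nonzero Yroot_nonzero by auto
    then show False using outside that unfolding block_index_def by (elim disjE conjE) simp_all
  qed
  have "lw_vector n i a b c d = 0"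
    using assms(2) unfolding lw_vector_entry by (intro sum.neutral ballI) (simp add: vanish)
  with assms show False by simp
qed

definition lower_block_part :: "nat \<Rightarrow> nat \<Rightarrow> cmat \<Rightarrow> cmat" where
  "lower_block_part n i Z = (\<Sum>p<i. \<Sum>q<p. (\<lambda>a b. Z p q * gl_unit n p q a b))"

lemma lower_block_part_entry:
  "lower_block_part n i Z a e = (\<Sum>p<i. \<Sum>q<p. Z p q * gl_unit n p q a e)"
  unfolding lower_block_part_def by (simp add: sum_apply)

lemma tact_lower_block_part_lw_vector:
  assumes "i < n" shows "tact n (lower_block_part n i Z) (lw_vector n i) = 0"
  unfolding lower_block_part_def tact_sum_left tact_smult_left
  using tact_gl_unit_lw_vector[OF _ _ assms] by (intro sum.neutral ballI) (simp add: tsmult_zero)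

lemma lower_block_part_upper:
  assumes "a < i" "e < i" "i < n"
  shows "lower_block_part n i Z a e = (if e < a then Z a e else 0)"
proof -
  have "lower_block_part n i Z a e = (\<Sum>p<i. \<Sum>q<p. if p = a then (if q = e then Z p q else 0) else 0)"
    unfolding lower_block_part_entry using assms by (intro sum.cong refl) (auto simp: gl_unit_entry)
  also have "\<dots> = (\<Sum>p<i. if p = a then (\<Sum>q<p. if q = e then Z p q else 0) else 0)"
    by (intro sum.cong refl) auto
  also have "\<dots> = (if e < a then Z a e else 0)"
    using assms by (simp only: sum_lessThan_delta) simp
  finally show ?thesis .
qed

lemma lower_block_part_lower:
  assumes "x < i" "y < i" "i < n"
  shows "lower_block_part n i Z (n+x) (n+y) = - (if x < y then Z y x else 0)"
proof -
  have "lower_block_part n i Z (n+x) (n+y)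
      = (\<Sum>p<i. \<Sum>q<p. - (if p = y then (if q = x then Z p q else 0) else 0))"
    unfolding lower_block_part_entry using assms by (intro sum.cong refl) (auto simp: gl_unit_entry)
  also have "\<dots> = - (\<Sum>p<i. if p = y then (\<Sum>q<p. if q = x then Z p q else 0) else 0)"
    by (simp only: sum_negf) (intro arg_cong[where f=uminus] sum.cong refl, auto)
  also have "\<dots> = - (if x < y then Z y x else 0)"
    using assms by (simp only: sum_lessThan_delta) simp
  finally show ?thesis .
qed

lemma lower_block_part_outside:
  assumes "\<not> (a < i \<and> e < i)" "\<not> (\<exists>x y. a = n + x \<and> e = n + y \<and> x < i \<and> y < i)"
  shows "lower_block_part n i Z a e = 0"
  unfolding lower_block_part_entry
proof (intro sum.neutral ballI)
  fix p q assume "p \<in> {..<i}" "q \<in> {..<p}"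
  then have pq: "p < i" "q < i" by auto
  have "gl_unit n p q a e = 0"
  proof (rule ccontr)
    assume "gl_unit n p q a e \<noteq> 0"
    then consider "a = p" "e = q" | "a = n + q" "e = n + p" using gl_unit_nonzero by blast
    then show False using assms pq by cases blast+
  qed
  then show "Z p q * gl_unit n p q a e = 0" by simp
qed

text \<open>An element of l \<inter> nbar agrees with its gl(i)-part wherever a row or column index lies
  in the block of lw_vector: since it has degree 0, its entries there stay inside the block.\<close>

lemma lower_block_part_agrees:
  assumes Z: "Z \<in> levi n i" "Z \<in> nbar_borel n" and i: "i < n"
    and block: "block_index n i a \<or> block_index n i e"
  shows "lower_block_part n i Z a e = Z a e"
proof -
  have upper_zero: "Z x y = 0" if "x < n" "y < n" "x \<le> y" for x y
    using Z(2) that unfolding nbar_borel_def by blast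
  consider (upper) "a < i" "e < i" | (lower) x y where "a = n + x" "e = n + y" "x < i" "y < i"
    | (outside) "\<not> (a < i \<and> e < i)" "\<not> (\<exists>x y. a = n + x \<and> e = n + y \<and> x < i \<and> y < i)"
    by blast
  then show ?thesis
  proof cases
    case upper
    then show ?thesis using lower_block_part_upper[OF upper i] upper_zero[of a e] i by auto
  next
    case (lower x y)
    then show ?thesis
      using lower_block_part_lower[OF lower(3,4) i] upper_zero[of y x] i
        sp_lower_block[OF levi_sp[OF Z(1)], of x y] by auto
  next
    case outside
    have "Hgr n i a a \<noteq> Hgr n i e e"
      using outside block i unfolding block_index_def Hgr_def by (auto, presburger+)
    then have "Z a e = 0"
      using Z(1) i unfolding levi_def gdeg_iff[OF less_imp_le[OF i]] by fastforce
    then show ?thesis using lower_block_part_outside[OF outside] by simp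
  qed
qed

lemma lw_vector_lowest:
  assumes Z: "Z \<in> levi n i" "Z \<in> nbar_borel n" and i: "2 \<le> i" "i < n"
  shows "tact n Z (lw_vector n i) = 0"
proof -
  define R where "R = Z - lower_block_part n i Z"
  have R_block: "R x y = 0" if "block_index n i x \<or> block_index n i y" for x y
    using lower_block_part_agrees[OF Z i(2) that] unfolding R_def by simp
  have "tact n R (lw_vector n i) a b c d = 0" for a b c d
  proof -
    have zero_terms: "R a e * lw_vector n i e b c d = 0" "lw_vector n i a e c d * R e b = 0"
      "R c e * lw_vector n i a b e d = 0" "lw_vector n i a b c e * R e d = 0" for e
      using R_block lw_vector_support[OF _ i(1)] by (metis mult_eq_0_iff)+
    show ?thesis unfolding tact_def
      by (intro sum.neutral ballI) (simp only: zero_terms diff_self add_0 diff_0 minus_zero)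
  qed
  then have "tact n R (lw_vector n i) = 0" by (simp add: fun_eq_iff)
  moreover have "Z = lower_block_part n i Z + R" unfolding R_def by simp
  ultimately show ?thesis
    using tact_lower_block_part_lw_vector[OF i(2)] by (metis add.right_neutral tact_add_left)
qed

section \<open>Uniqueness of the lowest weight vector up to scale\<close>

text \<open>The eps_(p+1)-coefficient of the weight of E_ab \<otimes> E_cd plus eps_1 + eps_2; it vanishes on the
  support of any vector of weight -(eps_1 + eps_2).\<close>

definition wt_coeff :: "nat \<Rightarrow> nat \<Rightarrow> nat \<Rightarrow> nat \<Rightarrow> nat \<Rightarrow> nat \<Rightarrow> int" where
  "wt_coeff n a b c d p =
     of_bool (a = p) - of_bool (a = n+p) - of_bool (b = p) + of_bool (b = n+p)
   + of_bool (c = p) - of_bool (c = n+p) - of_bool (d = p) + of_bool (d = n+p)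
   + of_bool (p = 0) + of_bool (p = 1)"

lemma wt_coeff_upper_left_cases:
  assumes "x < n" "y < n" "j < i" "k < i" "i < n" "2 \<le> i"
    and wt: "\<forall>p<n. wt_coeff n x y (n+j) k p = 0"
  shows "(x = y \<and> j = 0 \<and> k = 1) \<or> (x = y \<and> j = 1 \<and> k = 0) \<or> (x = 1 \<and> y = 0 \<and> j = 1 \<and> k = 1)
    \<or> (x = 0 \<and> y = 1 \<and> j = 0 \<and> k = 0)
    \<or> (2 \<le> x \<and> y = 0 \<and> j = 1 \<and> k = x) \<or> (2 \<le> x \<and> y = 0 \<and> j = x \<and> k = 1)
    \<or> (2 \<le> x \<and> y = 1 \<and> j = 0 \<and> k = x) \<or> (2 \<le> x \<and> y = 1 \<and> j = x \<and> k = 0)"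
proof -
  have "wt_coeff n x y (n+j) k 0 = 0" "wt_coeff n x y (n+j) k 1 = 0" "wt_coeff n x y (n+j) k x = 0"
    "wt_coeff n x y (n+j) k y = 0" "wt_coeff n x y (n+j) k j = 0" "wt_coeff n x y (n+j) k k = 0"
    using wt assms by auto
  then show ?thesis
    using assms(1-6) unfolding wt_coeff_def of_bool_def by (simp, auto split: if_splits)
qed

lemma wt_coeff_not_upper_right:
  assumes "x < n" "y < n" "j < i" "k < i" "i < n" "2 \<le> i"
    and wt: "\<forall>p<n. wt_coeff n x (n+y) (n+j) k p = 0"
  shows False
proof -
  have "wt_coeff n x (n+y) (n+j) k 0 = 0" "wt_coeff n x (n+y) (n+j) k 1 = 0"
    "wt_coeff n x (n+y) (n+j) k x = 0"
    using wt assms by auto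
  then show ?thesis
    using assms(1-6) unfolding wt_coeff_def of_bool_def by (simp, auto split: if_splits)
qed

lemma wt_coeff_not_lower_left:
  assumes "x < n" "y < n" "j < i" "k < i" "i < n" "2 \<le> i"
    and wt: "\<forall>p<n. wt_coeff n (n+x) y (n+j) k p = 0"
  shows False
proof -
  have "wt_coeff n (n+x) y (n+j) k 0 = 0" "wt_coeff n (n+x) y (n+j) k 1 = 0"
    "wt_coeff n (n+x) y (n+j) k x = 0" "wt_coeff n (n+x) y (n+j) k j = 0" "wt_coeff n (n+x) y (n+j) k k = 0"
    using wt assms by auto
  then show ?thesis
    using assms(1-6) unfolding wt_coeff_def of_bool_def by (simp, auto split: if_splits)
qed

locale lowest_wt_condition =
  fixes n i :: nat and w :: tens
  assumes two_le_i: "2 \<le> i" and i_less_n: "i < n"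
    and in_tspan: "w \<in> tspan (levi n i) (gdeg n i (-2))"
    and weight: "\<And>H. H \<in> cartan n \<Longrightarrow> tact n H w = tsmult (- (H 0 0 + H 1 1)) w"
    and lowest: "\<And>Z. Z \<in> levi n i \<Longrightarrow> Z \<in> nbar_borel n \<Longrightarrow> tact n Z w = 0"
begin

lemma slice_levi: "(\<lambda>a b. w a b c d) \<in> levi n i"
  using tspan_slices(1)[OF in_tspan] msubspace_gdeg i_less_n unfolding levi_def by simp

lemma slice_gdeg: "(\<lambda>c d. w a b c d) \<in> gdeg n i (-2)"
  using tspan_slices(2)[OF in_tspan] msubspace_gdeg i_less_n unfolding levi_def by simp

lemma support_right: "w a b c d \<noteq> 0 \<Longrightarrow> n \<le> c \<and> c < n + i \<and> d < i"
  using slice_gdeg[of a b] i_less_n unfolding gdeg_iff[OF less_imp_le[OF i_less_n]]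
  by (auto simp: Hgr_def split: if_splits)

lemma support_left: "w a b c d \<noteq> 0 \<Longrightarrow> a < 2*n \<and> b < 2*n"
  using sp_vanish_outside[OF levi_sp[OF slice_levi], of a b c d] by (metis not_le)

lemma sym_right: "j < n \<Longrightarrow> k < n \<Longrightarrow> w a b (n+j) k = w a b (n+k) j"
  using sp_lower_sym[OF gdeg_sp[OF slice_gdeg]] by simp

lemma antisym_left: "x < n \<Longrightarrow> y < n \<Longrightarrow> w (n+x) (n+y) c d = - w y x c d"
  using sp_lower_block[OF levi_sp[OF slice_levi]] by simp

lemma wt_coeff_support:
  assumes "p < n" "w a b c d \<noteq> 0" shows "wt_coeff n a b c d p = 0"
proof -
  let ?H = "gl_unit n p p"
  have H: "?H \<in> cartan n" using gl_unit_cartan[OF assms(1)] .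
  have "tact n ?H w a b c d = - (?H 0 0 + ?H 1 1) * w a b c d"
    using weight[OF H] by (simp add: tsmult_def)
  then have "(?H a a - ?H b b + ?H c c - ?H d d) * w a b c d = - (?H 0 0 + ?H 1 1) * w a b c d"
    unfolding tact_cartan[OF H] .
  then have "(?H a a - ?H b b + ?H c c - ?H d d + (?H 0 0 + ?H 1 1)) * w a b c d = 0"
    by (simp only: distrib_right eq_neg_iff_add_eq_0 mult_minus_left)
  then have "?H a a - ?H b b + ?H c c - ?H d d + (?H 0 0 + ?H 1 1) = 0" using assms(2) by simp
  moreover have "?H a a - ?H b b + ?H c c - ?H d d + (?H 0 0 + ?H 1 1) = of_int (wt_coeff n a b c d p)"
  proof -
    have "0 \<noteq> n + p" "1 \<noteq> n + p" using two_le_i i_less_n by simp_all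
    moreover have "gl_unit n p p x x = of_bool (x = p) - of_bool (x = n+p)" for x
      unfolding gl_unit_entry by simp
    ultimately show ?thesis unfolding wt_coeff_def
      by (simp only: of_int_add of_int_diff of_int_of_bool eq_commute[of 0 p] eq_commute[of 1 p]
          of_bool_eq(1) if_False) (simp add: algebra_simps)
  qed
  ultimately show ?thesis by simp
qed

lemma killed: "q < p \<Longrightarrow> p < i \<Longrightarrow> tact n (gl_unit n p q) w a b c d = 0"
  using lowest[OF gl_unit_levi gl_unit_nbar_borel] i_less_n by simp

text \<open>Each relation below comes from gl_unit n p 0 (p = 1, or 2 \<le> p < i) annihilating w,
  combined with the symmetry of the z(nbar) factor.\<close>

lemma entry_diag_zero: assumes "2 \<le> x" "x < n" shows "w x x n 1 = 0"
proof -
  have "tact n (gl_unit n 1 0) w x x n 0 = 0" using killed[of 0 1] two_le_i by simp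
  moreover have "w x x (n+1) 0 = w x x n 1" using sym_right[of 1 0] two_le_i i_less_n by simp
  ultimately show ?thesis using assms i_less_n by (simp add: tact_gl_unit_entry)
qed

lemma entry_01_n0: "w 0 1 n 0 = 2 * w 1 1 n 1"
proof -
  have "tact n (gl_unit n 1 0) w 1 1 n 0 = 0" using killed[of 0 1] two_le_i by simp
  moreover have "w 1 1 (n+1) 0 = w 1 1 n 1" using sym_right[of 1 0] two_le_i i_less_n by simp
  ultimately show ?thesis using two_le_i i_less_n by (simp add: tact_gl_unit_entry)
qed

lemma entry_00_n1: "w 0 0 n 1 = - w 1 1 n 1"
proof -
  have "tact n (gl_unit n 1 0) w 0 0 n 0 = 0" using killed[of 0 1] two_le_i by simp
  moreover have "w 0 0 (n+1) 0 = w 0 0 n 1" using sym_right[of 1 0] two_le_i i_less_n by simp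
  ultimately show ?thesis using two_le_i i_less_n entry_01_n0 by (simp add: tact_gl_unit_entry)
qed

lemma entry_10_n1: "w 1 0 (n+1) 1 = - 2 * w 1 1 n 1"
proof -
  have "tact n (gl_unit n 1 0) w 1 0 n 1 = 0" using killed[of 0 1] two_le_i by simp
  then show ?thesis using two_le_i i_less_n entry_00_n1 by (simp add: tact_gl_unit_entry)
qed

lemma entry_m1_nm: assumes "2 \<le> m" "m < i" shows "w m 1 n m = w 1 1 n 1"
proof -
  have "tact n (gl_unit n m 0) w m 1 n 0 = 0" using killed[of 0 m] assms by simp
  moreover have "w m 1 (n+m) 0 = w m 1 n m" using sym_right[of m 0] assms i_less_n by simp
  ultimately show ?thesis using assms i_less_n entry_01_n0 by (simp add: tact_gl_unit_entry)
qed

lemma entry_m0_nm: assumes "2 \<le> m" "m < i" shows "w m 0 (n+1) m = - w 1 1 n 1"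
proof -
  have "tact n (gl_unit n 1 0) w m 0 n m = 0" using killed[of 0 1] two_le_i by simp
  then show ?thesis using assms i_less_n entry_m1_nm[OF assms] by (simp add: tact_gl_unit_entry)
qed

lemma upper_left_entry_zero:
  assumes w11: "w 1 1 n 1 = 0" and "x < n" "y < n" "j < i" "k < i"
  shows "w x y (n+j) k = 0"
proof (rule ccontr)
  assume nz: "w x y (n+j) k \<noteq> 0"
  then have "\<forall>p<n. wt_coeff n x y (n+j) k p = 0" using wt_coeff_support by blast
  from wt_coeff_upper_left_cases[OF assms(2-5) i_less_n two_le_i this] show False
  proof (elim disjE conjE)
    assume case_x: "x = y" "j = 0" "k = 1"
    consider "x = 0" | "x = 1" | "2 \<le> x" by linarith
    then show False using case_x nz w11 entry_00_n1 entry_diag_zero[of x] assms by cases simp_all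
  next
    assume "x = y" "j = 1" "k = 0"
    then have nz': "w x x n 1 \<noteq> 0" using nz sym_right[of 1 0 x x] two_le_i i_less_n by simp
    consider "x = 0" | "x = 1" | "2 \<le> x" by linarith
    then show False using nz' w11 entry_00_n1 entry_diag_zero[of x] assms by cases simp_all
  next
    assume "x = 1" "y = 0" "j = 1" "k = 1"
    then show False using nz w11 entry_10_n1 by simp
  next
    assume "x = 0" "y = 1" "j = 0" "k = 0"
    then show False using nz w11 entry_01_n0 by simp
  next
    assume "2 \<le> x" "y = 0" "j = 1" "k = x"
    then show False using nz w11 entry_m0_nm[of x] assms by simp
  next
    assume "2 \<le> x" "y = 0" "j = x" "k = 1"
    then show False using nz w11 entry_m0_nm[of x] sym_right[of x 1 x 0] assms by simp
  next
    assume "2 \<le> x" "y = 1" "j = 0" "k = x"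
    then show False using nz w11 entry_m1_nm[of x] assms by simp
  next
    assume "2 \<le> x" "y = 1" "j = x" "k = 0"
    then show False using nz w11 entry_m1_nm[of x] sym_right[of x 0 x 1] assms by simp
  qed
qed

theorem eq_zero_if_normalized_entry_zero:
  assumes w11: "w 1 1 n 1 = 0" shows "w = 0"
proof -
  have "w a b c d = 0" for a b c d
  proof (rule ccontr)
    assume nz: "w a b c d \<noteq> 0"
    then obtain j where c: "c = n + j" "j < i" and d: "d < i"
      using support_right by (metis add_less_cancel_left le_Suc_ex)
    have ab: "a < 2*n" "b < 2*n" using support_left[OF nz] by auto
    have wt: "\<forall>p<n. wt_coeff n a b c d p = 0" using wt_coeff_support nz by blast
    have jn: "j < n" "d < n" using c d i_less_n by simp_all
    consider "a < n" "b < n" | x where "a < n" "b = n + x" "x < n" | x where "a = n + x" "x < n" "b < n"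
      | x y where "a = n + x" "b = n + y" "x < n" "y < n"
      using ab by (metis add_less_cancel_left le_Suc_ex mult_2 not_less)
    then show False
    proof cases
      case 1 then show ?thesis using nz upper_left_entry_zero[OF w11 _ _ c(2) d] c by simp
    next
      case (2 x)
      then show ?thesis using wt_coeff_not_upper_right[of a n x j i d] wt c d i_less_n two_le_i by simp
    next
      case (3 x)
      then show ?thesis using wt_coeff_not_lower_left[of x n b j i d] wt c d i_less_n two_le_i by simp
    next
      case (4 x y)
      then show ?thesis
        using nz antisym_left[of x y c d] upper_left_entry_zero[OF w11 _ _ c(2) d, of y x] c by simp
    qed
  qed
  then show ?thesis by (simp add: fun_eq_iff)
qed

end

lemma lowest_wt_vec_iff:
  "2 \<le> i \<Longrightarrow> i < n \<Longrightarrow> lowest_wt_vec n i v \<longleftrightarrow> lowest_wt_condition n i v \<and> v \<noteq> 0"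
  unfolding lowest_wt_vec_def lowest_wt_condition_def by (auto simp: tzero_eq_zero)

lemma lowest_wt_condition_lw_vector: "2 \<le> i \<Longrightarrow> i < n \<Longrightarrow> lowest_wt_condition n i (lw_vector n i)"
  by unfold_locales (simp_all add: lw_vector_tspan lw_vector_weight lw_vector_lowest)

lemma lowest_wt_vec_lw_vector: "2 \<le> i \<Longrightarrow> i < n \<Longrightarrow> lowest_wt_vec n i (lw_vector n i)"
  using lowest_wt_vec_iff lowest_wt_condition_lw_vector lw_vector_normalized by fastforce

lemma lowest_wt_condition_diff_tsmult:
  assumes "lowest_wt_condition n i v" "lowest_wt_condition n i w"
  shows "lowest_wt_condition n i (v - tsmult t w)"
proof -
  interpret v: lowest_wt_condition n i v by fact
  interpret w: lowest_wt_condition n i w by fact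
  show ?thesis
  proof
    show "v - tsmult t w \<in> tspan (levi n i) (gdeg n i (-2))"
      using v.in_tspan w.in_tspan by (intro tspan_diff tspan_smult)
    show "tact n H (v - tsmult t w) = tsmult (- (H 0 0 + H 1 1)) (v - tsmult t w)" if "H \<in> cartan n" for H
      unfolding tact_diff tact_tsmult v.weight[OF that] w.weight[OF that]
      by (simp add: tsmult_def fun_eq_iff algebra_simps)
    show "tact n Z (v - tsmult t w) = 0" if "Z \<in> levi n i" "Z \<in> nbar_borel n" for Z
      using v.lowest[OF that] w.lowest[OF that] by (simp add: tact_diff tact_tsmult tsmult_zero)
  qed (use v.two_le_i v.i_less_n in auto)
qed

theorem lowest_wt_vec_eq_tsmult_lw_vector:
  assumes "lowest_wt_vec n i v" "2 \<le> i" "i < n"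
  shows "v = tsmult (v 1 1 n 1) (lw_vector n i)"
proof -
  let ?u = "v - tsmult (v 1 1 n 1) (lw_vector n i)"
  interpret u: lowest_wt_condition n i ?u
    using assms lowest_wt_vec_iff lowest_wt_condition_lw_vector
    by (blast intro: lowest_wt_condition_diff_tsmult)
  have "?u 1 1 n 1 = 0" using lw_vector_normalized assms(2,3) by (simp add: tsmult_def)
  then have "?u = 0" by (rule u.eq_zero_if_normalized_entry_zero)
  then show ?thesis by simp
qed

section \<open>Pairing with tau_2\<close>

definition zroot_index :: "nat \<Rightarrow> (nat \<times> nat) set" where
  "zroot_index i = {(j, k). j \<le> k \<and> k < i}"

lemma finite_zroot_index: "finite (zroot_index i)"
  by (rule finite_subset[of _ "{..<i} \<times> {..<i}"]) (auto simp: zroot_index_def)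

lemma tau2_eq:
  "tau2 n i X = tsmult (1/2)
     (\<Sum>(j, k)\<in>zroot_index i. tp (brk n X (brk n X (Xstar n j k))) (Xroot n j k))"
  unfolding tau2_def tsmult_def zroot_index_def by (simp add: fun_eq_iff sum_apply case_prod_unfold)

lemma mtrace_Yroot_mmult:
  assumes "s < n" "m < n"
  shows "mtrace n (mmult n (Yroot n s m) B) = B m (n+s) + B s (n+m)"
proof -
  have "mmult n (Yroot n s m) B a a = (if a = n+s then B m a else 0) + (if a = n+m then B s a else 0)" for a
    unfolding mmult_def Yroot_entry using assms
    by (cases "a = n+s"; cases "a = n+m"; simp add: distrib_right sum.distrib if_distrib[of "\<lambda>x. x * _"]
        mult.assoc sum_distrib_left[symmetric] cong: if_cong)
  then show ?thesis unfolding mtrace_def using assms by (simp add: sum.distrib)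
qed

lemma mtrace_gl_unit_mmult:
  "p < n \<Longrightarrow> q < n \<Longrightarrow> mtrace n (mmult n (gl_unit n p q) B) = B q p - B (n+p) (n+q)"
  unfolding mtrace_def mmult_def by (simp add: sum_gl_unit_left sum_subtractf)

lemma killing_Yroot_Xroot:
  assumes "s < n" "m < n" "j < n" "k < n"
  shows "killing n (Yroot n s m) (Xroot n j k)
    = of_nat (2*n+2) * (2 * ((if s = j \<and> m = k then 1 else 0) + (if s = k \<and> m = j then 1 else 0)))"
  unfolding killing_def mtrace_Yroot_mmult[OF assms(1,2)] Xroot_entry
  by (cases "s = j"; cases "m = k"; cases "s = k"; cases "m = j"; simp)

lemma killing_msmult_right: "killing n M (msmult t A) = t * killing n M A"
  unfolding killing_def mtrace_def mmult_def msmult_def by (simp add: sum_distrib_left algebra_simps)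

lemma brk_msmult_right: "brk n X (msmult t A) = msmult t (brk n X A)"
  unfolding brk_def mmult_def msmult_def by (simp add: fun_eq_iff sum_distrib_left algebra_simps)

text \<open>The X^*_gamma form the basis of z(nbar) dual to the X_gamma under the Killing form.\<close>

lemma sum_Xstar_dual_basis:
  assumes f: "\<And>c Y. f (msmult c Y) = c * f Y" and "s < i" "m < i" "i < n"
  shows "(\<Sum>(j, k)\<in>zroot_index i. f (Xstar n j k) * killing n (Yroot n s m) (Xroot n j k))
    = f (Yroot n s m)"
proof -
  have "f (Xstar n j k) * killing n (Yroot n s m) (Xroot n j k)
      = (if (j, k) = (min s m, max s m) then f (Yroot n s m) else 0)"
    if "(j, k) \<in> zroot_index i" for j k
  proof -
    have jk: "j \<le> k" "j < n" "k < n" using that assms unfolding zroot_index_def by auto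
    have sm: "s < n" "m < n" using assms by auto
    show ?thesis
    proof (cases "(j, k) = (min s m, max s m)")
      case True
      have "Yroot n s m = Yroot n j k"
        using True Yroot_commute[of n s m] by (cases "s \<le> m") (simp_all add: min_def max_def)
      moreover have "killing n (Yroot n j k) (Xroot n j k) \<noteq> 0"
        unfolding killing_Yroot_Xroot[OF jk(2,3) jk(2,3)] by (simp del: of_nat_Suc)
      ultimately show ?thesis using True unfolding Xstar_def f by simp
    next
      case False
      then have "(s = j \<and> m = k) = False" "(s = k \<and> m = j) = False"
        using jk(1) by (auto simp: min_absorb1 min_absorb2 max_absorb1 max_absorb2)
      then have "killing n (Yroot n s m) (Xroot n j k) = 0"
        unfolding killing_Yroot_Xroot[OF sm jk(2,3)] by (simp only: if_False add_0 mult_zero_right)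
      then show ?thesis unfolding if_not_P[OF False] by simp
    qed
  qed
  then have "(\<Sum>(j, k)\<in>zroot_index i. f (Xstar n j k) * killing n (Yroot n s m) (Xroot n j k))
      = (\<Sum>x\<in>zroot_index i. if x = (min s m, max s m) then f (Yroot n s m) else 0)"
    by (intro sum.cong refl) (simp add: split_beta del: prod.inject)
  also have "\<dots> = f (Yroot n s m)"
    using assms by (simp only: sum.delta[OF finite_zroot_index]) (simp add: zroot_index_def min_le_iff_disj)
  finally show ?thesis .
qed

text \<open>X = X_(eps_1+eps_(i+1)) + X_(eps_2-eps_(i+1)) in g(1); the two roots add up to eps_1+eps_2.\<close>

definition X_witness :: "nat \<Rightarrow> nat \<Rightarrow> cmat" where
  "X_witness n i = Emat 0 (n+i) + Emat i n + Emat 1 i - Emat (n+i) (n+1)"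

lemma X_witness_entry:
  "X_witness n i a b = (if a = 0 \<and> b = n+i then 1 else 0) + (if a = i \<and> b = n then 1 else 0)
     + (if a = 1 \<and> b = i then 1 else 0) - (if a = n+i \<and> b = n+1 then 1 else 0)"
  unfolding X_witness_def Emat_def by simp

lemma X_witness_gdeg:
  assumes "2 \<le> i" "i < n" shows "X_witness n i \<in> gdeg n i 1"
proof (rule gdeg_intro)
  have "X_witness n i x (n+y) = X_witness n i y (n+x)" if "x < n" "y < n" for x y
    unfolding X_witness_entry using assms that
    by (cases "x = 0"; cases "y = i"; cases "x = i"; cases "y = 0"; simp)
  moreover have "X_witness n i (n+x) (n+y) = - X_witness n i y x" if "x < n" "y < n" for x y
    unfolding X_witness_entry using assms that by (cases "x = i"; cases "y = 1"; simp)
  ultimately show "X_witness n i \<in> sp n"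
    unfolding sp_iff using assms by (auto simp: X_witness_entry)
  show "Hgr n i a a - Hgr n i b b = of_int 1" if "X_witness n i a b \<noteq> 0" for a b
    using that assms unfolding X_witness_entry by (auto simp: Hgr_def split: if_splits)
qed (use assms in simp)

lemma brk_X_witness:
  assumes "2 \<le> i" "i < n"
  shows "brk n (X_witness n i) B a b =
      (if a = 0 then B (n+i) b else 0) + (if a = i then B n b else 0)
    + (if a = 1 then B i b else 0) - (if a = n+i then B (n+1) b else 0)
    - ((if b = n+i then B a 0 else 0) + (if b = n then B a i else 0) + (if b = i then B a 1 else 0)
       - (if b = n+1 then B a (n+i) else 0))"
proof -
  have "mmult n (X_witness n i) B a b = (if a = 0 then B (n+i) b else 0) + (if a = i then B n b else 0)
    + (if a = 1 then B i b else 0) - (if a = n+i then B (n+1) b else 0)"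
    unfolding mmult_def X_witness_def using assms
    by (simp add: distrib_right left_diff_distrib sum.distrib sum_subtractf sum_Emat_left[where B="\<lambda>e. B e b"])
  moreover have "mmult n B (X_witness n i) a b = (if b = n+i then B a 0 else 0) + (if b = n then B a i else 0)
    + (if b = i then B a 1 else 0) - (if b = n+1 then B a (n+i) else 0)"
    unfolding mmult_def X_witness_def using assms
    by (simp add: distrib_left right_diff_distrib sum.distrib sum_subtractf sum_Emat_right[where B="\<lambda>e. B a e"])
  ultimately show ?thesis unfolding brk_def by simp
qed

lemma killing_gl_unit_m1_X_witness:
  assumes "m < i" "2 \<le> i" "i < n"
  shows "killing n (gl_unit n m 1) (brk n (X_witness n i) (brk n (X_witness n i) (Yroot n 0 m)))
    = of_nat (2*n+2) * (2 + 2 * (if m = 0 then 1 else 0))"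
  unfolding killing_def using assms by (simp add: mtrace_gl_unit_mmult brk_X_witness Yroot_entry)

lemma killing_gl_unit_m0_X_witness:
  assumes "m < i" "2 \<le> i" "i < n"
  shows "killing n (gl_unit n m 0) (brk n (X_witness n i) (brk n (X_witness n i) (Yroot n 1 m)))
    = - of_nat (2*n+2) * (2 + 2 * (if m = 1 then 1 else 0))"
  unfolding killing_def using assms by (simp add: mtrace_gl_unit_mmult brk_X_witness Yroot_entry)

theorem tpair_lw_vector_tau2_X_witness:
  assumes "2 \<le> i" "i < n"
  shows "tpair n (lw_vector n i) (tau2 n i (X_witness n i)) = of_nat (2*n+2) * of_nat (2*i+2)"
proof -
  let ?X = "X_witness n i" and ?c = "of_nat (2*n+2) :: complex"
  have hom: "killing n M (brk n ?X (brk n ?X (msmult c Y))) = c * killing n M (brk n ?X (brk n ?X Y))"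
    for M c Y by (simp add: brk_msmult_right killing_msmult_right)
  have "tpair n (lw_vector n i) (tau2 n i ?X)
    = 1/2 * (\<Sum>(j, k)\<in>zroot_index i. \<Sum>m<i.
        killing n (gl_unit n m 1) (brk n ?X (brk n ?X (Xstar n j k))) * killing n (Yroot n 0 m) (Xroot n j k)
      - killing n (gl_unit n m 0) (brk n ?X (brk n ?X (Xstar n j k))) * killing n (Yroot n 1 m) (Xroot n j k))"
    unfolding tau2_eq tpair_smult_right lw_vector_def
    by (simp add: tpair_sum_right tpair_sum_left tpair_diff_left tpair_tp case_prod_unfold)
  also have "\<dots> = 1/2 * (\<Sum>m<i. \<Sum>(j, k)\<in>zroot_index i.
        killing n (gl_unit n m 1) (brk n ?X (brk n ?X (Xstar n j k))) * killing n (Yroot n 0 m) (Xroot n j k)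
      - killing n (gl_unit n m 0) (brk n ?X (brk n ?X (Xstar n j k))) * killing n (Yroot n 1 m) (Xroot n j k))"
    unfolding case_prod_unfold by (subst sum.swap) (rule refl)
  also have "\<dots> = 1/2 * (\<Sum>m<i.
        killing n (gl_unit n m 1) (brk n ?X (brk n ?X (Yroot n 0 m)))
      - killing n (gl_unit n m 0) (brk n ?X (brk n ?X (Yroot n 1 m))))"
    using sum_Xstar_dual_basis[where f = "\<lambda>Y. killing n (gl_unit n _ 1) (brk n ?X (brk n ?X Y))", OF hom]
      sum_Xstar_dual_basis[where f = "\<lambda>Y. killing n (gl_unit n _ 0) (brk n ?X (brk n ?X Y))", OF hom]
      assms
    by (intro arg_cong[where f = "\<lambda>x. 1/2 * x"] sum.cong refl) (simp add: sum_subtractf case_prod_unfold)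
  also have "\<dots> = 1/2 * (\<Sum>m<i. ?c * (2 + 2 * (if m = 0 then 1 else 0)) + ?c * (2 + 2 * (if m = 1 then 1 else 0)))"
    using assms
    by (intro arg_cong[where f = "\<lambda>x. 1/2 * x"] sum.cong refl)
      (simp only: lessThan_iff killing_gl_unit_m1_X_witness killing_gl_unit_m0_X_witness, simp)
  also have "\<dots> = ?c * of_nat (2*i+2)"
    using assms by (simp add: sum.distrib sum_distrib_left[symmetric] distrib_left algebra_simps)
  finally show ?thesis .
qed

theorem proposition5p6:
  fixes n i :: nat
  assumes "3 \<le> n" and "2 \<le> i" and "i \<le> n - 1"
  shows "(\<exists>v. lowest_wt_vec n i v) \<and>
         (\<forall>v. lowest_wt_vec n i v \<longrightarrow>
            (\<exists>Y \<in> gen_submod n (levi n i) v. \<exists>X \<in> gdeg n i 1.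
               tpair n Y (tau2 n i X) \<noteq> 0))"
proof (intro conjI allI impI)
  have i: "2 \<le> i" "i < n" using assms by auto
  show "\<exists>v. lowest_wt_vec n i v" using lowest_wt_vec_lw_vector[OF i] by blast
  fix v assume v: "lowest_wt_vec n i v"
  define t where "t = v 1 1 n 1"
  have v_eq: "v = tsmult t (lw_vector n i)"
    unfolding t_def by (rule lowest_wt_vec_eq_tsmult_lw_vector[OF v i])
  have "t \<noteq> 0" using v v_eq lowest_wt_vec_iff[OF i] by (auto simp: tsmult_def fun_eq_iff)
  moreover have "tpair n v (tau2 n i (X_witness n i)) = t * (of_nat (2*n+2) * of_nat (2*i+2))"
    unfolding v_eq tpair_smult_left tpair_lw_vector_tau2_X_witness[OF i] ..
  ultimately have "tpair n v (tau2 n i (X_witness n i)) \<noteq> 0" by (simp del: of_nat_Suc)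
  then show "\<exists>Y \<in> gen_submod n (levi n i) v. \<exists>X \<in> gdeg n i 1. tpair n Y (tau2 n i X) \<noteq> 0"
    using gen_base X_witness_gdeg[OF i] by blast
qed

end
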